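(* Let $A\in\mathbb K^{n\times n}$ have rank at most $s$, let $G,H\in\mathbb K^{n\times t}$, set $M=A-GH^{T}$ and $r=s+t$. Let $S\subseteq\mathbb K$ be finite. Let $T_1\in\mathbb K^{n\times r}$ and $T_2\in\mathbb K^{r\times n}$ be Toeplitz matrices whose defining entries ($n+r-1$ for each) are chosen independently and uniformly at random from $S$. Let $P=AT_1-G(H^TT_1)$ and $Q=T_2A-(T_2G)H^T$. Then, with probability at least $1-2r/|S|$, the row rank profile of $P$ equals the row rank profile of $M$ and the column rank profile of $Q$ equals the column rank profile of $M$.
   Context: The row rank profile of a matrix $X$ is the increasing sequence of indices $i$ such that row $i$ of $X$ is not in the span of rows $1,\dots,i-1$ of $X$; the column rank profile is defined analogously with columns. A Toeplitz matrix $T$ is one with $T_{i,j}$ depending only on $i-j$; an $n\times r$ Toeplitz matrix is determined by $n+r-1$ entries. *)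

theory Defs
  imports "Jordan_Normal_Form.DL_Rank" "HOL-Probability.Probability_Mass_Function"
begin

definition row_in_prev_span :: "'a::field mat \<Rightarrow> nat \<Rightarrow> bool" where
  "row_in_prev_span X i \<longleftrightarrow>
     (\<exists>c :: nat \<Rightarrow> 'a. \<forall>j < dim_col X. X $$ (i, j) = (\<Sum>k<i. c k * X $$ (k, j)))"

definition row_rank_profile :: "'a::field mat \<Rightarrow> nat list" where
  "row_rank_profile X = filter (\<lambda>i. \<not> row_in_prev_span X i) [0..<dim_row X]"

definition col_rank_profile :: "'a::field mat \<Rightarrow> nat list" where
  "col_rank_profile X = row_rank_profile (transpose_mat X)"

text \<open>The m x k Toeplitz matrix determined by the m+k-1 entries c 0, ..., c (m+k-2):
  entry (i,j) is c (i + (k-1) - j), which depends only on i - j.\<close>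
definition toeplitz_mat :: "nat \<Rightarrow> nat \<Rightarrow> (nat \<Rightarrow> 'a) \<Rightarrow> 'a mat" where
  "toeplitz_mat m k c = Matrix.mat m k (\<lambda>(i, j). c (i + (k - 1) - j))"

end

theory Submission
  imports Defs
begin

text \<open>Let M = A - G H^T, so that the row spaces of M and of M^T have dimension at most r.
  Right multiplication by T1 preserves every linear relation among the rows of M, hence the row
  rank profile, as soon as w^T T1 is nonzero for every nonzero w in the row space of M;
  symmetrically for T2 and the columns. The Toeplitz structure makes failure unlikely: if q is
  the last coordinate on which the space is supported, the entry of T1 indexed q + r - 1 meets
  that coordinate only in the first column. So either the remaining r - 1 columns already fail
  on the subspace w q = 0 (induction on the dimension), or the failure determines that entry
  from the others, which happens with probability at most 1/|S|.\<close>

section \<open>Spaces of vectors of bounded dimension\<close>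

definition lin_closed :: "(nat \<Rightarrow> 'a::field) set \<Rightarrow> bool" where
  "lin_closed V \<longleftrightarrow> (\<forall>a. \<forall>v\<in>V. \<forall>w\<in>V. (\<lambda>i. v i - a * w i) \<in> V)"

text \<open>Vectors of length n are modelled as functions of which only the entries below n count;
  dim_at_most n p V says that V has dimension at most p, i.e. any p + 1 members are dependent.\<close>
definition dim_at_most :: "nat \<Rightarrow> nat \<Rightarrow> (nat \<Rightarrow> 'a::field) set \<Rightarrow> bool" where
  "dim_at_most n p V \<longleftrightarrow> (\<forall>v. (\<forall>k\<le>p. v k \<in> V) \<longrightarrow>
     (\<exists>a. (\<exists>k\<le>p. a k \<noteq> 0) \<and> (\<forall>i<n. (\<Sum>k\<le>p. a k * v k i) = 0)))"

lemma dim_at_most_0_imp_zero: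
  assumes "dim_at_most n 0 V" "w \<in> V" "i < n"
  shows "w i = 0"
  using assms unfolding dim_at_most_def by (auto dest!: spec[of _ "\<lambda>_. w"])

lemma dim_at_most_vanishing_coord:
  assumes dim: "dim_at_most n (Suc p) V" and g: "g \<in> V" "g q \<noteq> 0" and "q < n"
  shows "dim_at_most n p {w \<in> V. w q = 0}"
  unfolding dim_at_most_def
proof (intro allI impI)
  fix v assume v: "\<forall>k\<le>p. v k \<in> {w \<in> V. w q = 0}"
  have "\<forall>k\<le>Suc p. (v(Suc p := g)) k \<in> V" using v g by auto
  then obtain a where a: "\<exists>k\<le>Suc p. a k \<noteq> 0"
    and comb: "\<forall>i<n. (\<Sum>k\<le>Suc p. a k * (v(Suc p := g)) k i) = 0"
    using dim unfolding dim_at_most_def by blast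
  have split: "(\<Sum>k\<le>Suc p. a k * (v(Suc p := g)) k i) = (\<Sum>k\<le>p. a k * v k i) + a (Suc p) * g i" for i
    by (simp add: sum.atMost_Suc)
  have "(\<Sum>k\<le>p. a k * v k q) = 0" using v by simp
  moreover have "(\<Sum>k\<le>p. a k * v k q) + a (Suc p) * g q = 0"
    using comb \<open>q < n\<close> split[of q] by simp
  ultimately have last: "a (Suc p) = 0" using g(2) by simp
  obtain k where "k \<le> Suc p" "a k \<noteq> 0" using a by blast
  with last have "k \<le> p" by (auto simp: le_Suc_eq)
  moreover have "\<forall>i<n. (\<Sum>k\<le>p. a k * v k i) = 0" using comb split last by simp
  ultimately show "\<exists>a. (\<exists>k\<le>p. a k \<noteq> 0) \<and> (\<forall>i<n. (\<Sum>k\<le>p. a k * v k i) = 0)"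
    using \<open>a k \<noteq> 0\<close> by blast
qed

lemma dim_at_most_if_spanned:
  fixes e :: "nat \<Rightarrow> nat \<Rightarrow> 'a::field"
  assumes "m \<le> p" and span: "\<And>w. w \<in> V \<Longrightarrow> \<exists>z. \<forall>i<n. w i = (\<Sum>l<m. z l * e l i)"
  shows "dim_at_most n p V"
  unfolding dim_at_most_def
proof (intro allI impI)
  fix v assume "\<forall>k\<le>p. v k \<in> V"
  then have "\<forall>k. \<exists>z. k \<le> p \<longrightarrow> (\<forall>i<n. v k i = (\<Sum>l<m. z l * e l i))" using span by blast
  then obtain Z where Z: "\<And>k i. k \<le> p \<Longrightarrow> i < n \<Longrightarrow> v k i = (\<Sum>l<m. Z k l * e l i)"
    by metis
  text \<open>There are p + 1 unknowns but only m \<le> p equations; padding them with a zero row gives a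
    singular square system.\<close>
  define Zm where "Zm = mat\<^sub>r (Suc p) (Suc p) (\<lambda>l. if l = p then 0\<^sub>v (Suc p) else Matrix.vec (Suc p) (\<lambda>k. Z k l))"
  have "Zm \<in> carrier_mat (Suc p) (Suc p)" unfolding Zm_def by simp
  moreover have "Determinant.det Zm = 0"
    unfolding Zm_def by (rule Determinant.det_row_0) auto
  ultimately obtain x where x: "x \<in> carrier_vec (Suc p)" "x \<noteq> 0\<^sub>v (Suc p)" "Zm *\<^sub>v x = 0\<^sub>v (Suc p)"
    using det_0_iff_vec_prod_zero_field by blast
  have "\<exists>k\<le>p. x $ k \<noteq> 0"
  proof (rule ccontr)
    assume "\<not> ?thesis"
    then have "x = 0\<^sub>v (Suc p)" using x(1) by (intro eq_vecI) auto
    with x(2) show False by simp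
  qed
  moreover have "(\<Sum>k\<le>p. x $ k * v k i) = 0" if "i < n" for i
  proof -
    have eqn: "(\<Sum>k\<le>p. x $ k * Z k l) = 0" if "l < m" for l
    proof -
      have "(\<Sum>k\<le>p. x $ k * Z k l) = (Zm *\<^sub>v x) $ l"
        using that \<open>m \<le> p\<close> x(1) unfolding Zm_def
        by (simp add: scalar_prod_def atLeast0LessThan lessThan_Suc_atMost mult.commute)
      then show ?thesis using x(3) that \<open>m \<le> p\<close> by simp
    qed
    have "(\<Sum>k\<le>p. x $ k * v k i) = (\<Sum>k\<le>p. x $ k * (\<Sum>l<m. Z k l * e l i))"
      using Z \<open>i < n\<close> by simp
    also have "\<dots> = (\<Sum>l<m. (\<Sum>k\<le>p. x $ k * Z k l) * e l i)"
      by (simp add: sum_distrib_left sum_distrib_right mult.assoc sum.swap[of _ "{..p}"])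
    finally show ?thesis using eqn by simp
  qed
  ultimately show "\<exists>a. (\<exists>k\<le>p. a k \<noteq> 0) \<and> (\<forall>i<n. (\<Sum>k\<le>p. a k * v k i) = 0)" by blast
qed

definition row_span :: "'a::field mat \<Rightarrow> (nat \<Rightarrow> 'a) set" where
  "row_span M = range (\<lambda>y t. \<Sum>l<dim_row M. y l * M $$ (l, t))"

lemma lin_closed_row_span: "lin_closed (row_span M)"
  unfolding lin_closed_def row_span_def
proof (clarify)
  fix a y z
  have "(\<lambda>t. (\<Sum>l<dim_row M. y l * M $$ (l, t)) - a * (\<Sum>l<dim_row M. z l * M $$ (l, t)))
      = (\<lambda>t. \<Sum>l<dim_row M. (y l - a * z l) * M $$ (l, t))"
    by (simp add: left_diff_distrib sum_subtractf sum_distrib_left mult.assoc)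
  then show "(\<lambda>i. (\<Sum>l<dim_row M. y l * M $$ (l, i)) - a * (\<Sum>l<dim_row M. z l * M $$ (l, i)))
      \<in> range (\<lambda>y t. \<Sum>l<dim_row M. y l * M $$ (l, t))" by auto
qed

lemma dim_at_most_row_span:
  assumes "M \<in> carrier_mat m n" "R \<le> p"
    and "\<And>i j. i < m \<Longrightarrow> j < n \<Longrightarrow> M $$ (i, j) = (\<Sum>l<R. F l i * E l j)"
  shows "dim_at_most n p (row_span M)"
proof (rule dim_at_most_if_spanned[OF \<open>R \<le> p\<close>])
  fix w assume "w \<in> row_span M"
  then obtain y where w: "w = (\<lambda>t. \<Sum>i<m. y i * M $$ (i, t))"
    using assms(1) unfolding row_span_def by auto
  have "w t = (\<Sum>l<R. (\<Sum>i<m. y i * F l i) * E l t)" if "t < n" for t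
  proof -
    have "w t = (\<Sum>i<m. y i * (\<Sum>l<R. F l i * E l t))" unfolding w using assms(3) that by simp
    also have "\<dots> = (\<Sum>l<R. (\<Sum>i<m. y i * F l i) * E l t)"
      by (simp only: sum_distrib_left sum_distrib_right mult.assoc, rule sum.swap)
    finally show ?thesis .
  qed
  then show "\<exists>z. \<forall>t<n. w t = (\<Sum>l<R. z l * E l t)"
    by (intro exI[of _ "\<lambda>l. \<Sum>i<m. y i * F l i"]) simp
qed

lemma (in vec_space) rank_factorization:
  assumes A: "A \<in> carrier_mat n nc"
  obtains B C where "\<And>i j. i < n \<Longrightarrow> j < nc \<Longrightarrow> A $$ (i, j) = (\<Sum>l<rank A. B l i * C l j)"
proof -
  obtain U where max: "maximal U (\<lambda>T. T \<subseteq> set (cols A) \<and> lin_indpt T)"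
    using maximal_exists[of "\<lambda>T. T \<subseteq> set (cols A) \<and> lin_indpt T" "card (set (cols A))" "{}"]
    by (meson List.finite_set card_mono empty_iff empty_subsetI finite_lin_indpt2 rev_finite_subset)
  have UA: "U \<subseteq> set (cols A)" and li: "lin_indpt U" using max unfolding maximal_def by auto
  have Uc: "U \<subseteq> carrier_vec n" using UA A cols_dim by blast
  have inspan: "col A j \<in> span U" if j: "j < nc" for j
  proof (cases "col A j \<in> U")
    case True
    then show ?thesis using in_own_span[OF Uc] by blast
  next
    case False
    have cA: "col A j \<in> set (cols A)" using j A by (simp add: cols_def)
    then have "\<not> lin_indpt (insert (col A j) U)"
      using max UA False unfolding maximal_def by (metis insert_subset subset_insertI)
    then show ?thesis
      using lin_dep_iff_in_span[OF Uc li _ False] cA A cols_dim by auto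
  qed
  obtain us where us: "set us = U" "distinct us"
    using finite_distinct_list[OF finite_subset[OF UA List.finite_set]] by blast
  have "\<exists>c. col A j = lincomb_list c us" if "j < nc" for j
  proof -
    have "col A j \<in> span_list us" using inspan[OF that] span_list_as_span[of us] Uc us(1) by simp
    then show ?thesis by (rule in_span_listE) blast
  qed
  then obtain C where C: "\<And>j. j < nc \<Longrightarrow> col A j = lincomb_list (C j) us" by metis
  have len: "length us = rank A"
    using rank_card_indpt[OF A max] us distinct_card by metis
  show thesis
  proof
    fix i j assume i: "i < n" and j: "j < nc"
    have "A $$ (i, j) = (mat_of_cols n us *\<^sub>v Matrix.vec (length us) (C j)) $ i"
    proof -
      have "A $$ (i, j) = col A j $ i" using i j A by simp
      also have "\<dots> = lincomb_list (C j) us $ i" using C[OF j] by simp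
      also have "lincomb_list (C j) us = mat_of_cols n us *\<^sub>v Matrix.vec (length us) (C j)"
        by (rule lincomb_list_as_mat_mult) (use us(1) Uc in auto)
      finally show ?thesis .
    qed
    also have "\<dots> = (\<Sum>l<rank A. us ! l $ i * C j l)"
      using i len by (simp add: mult_mat_vec_def scalar_prod_def atLeast0LessThan mat_of_cols_def)
    finally show "A $$ (i, j) = (\<Sum>l<rank A. us ! l $ i * C j l)" .
  qed
qed

lemma low_rank_update_factorization:
  fixes A G H :: "'a::field mat"
  assumes "A \<in> carrier_mat n m" "vec_space.rank n A \<le> s" "G \<in> carrier_mat n t" "H \<in> carrier_mat m t"
  obtains R F E where "R \<le> s + t"
    "\<And>i j. i < n \<Longrightarrow> j < m \<Longrightarrow> (A - G * transpose_mat H) $$ (i, j) = (\<Sum>l<R. F l i * E l j)"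
proof -
  let ?\<rho> = "vec_space.rank n A"
  obtain B C where BC: "\<And>i j. i < n \<Longrightarrow> j < m \<Longrightarrow> A $$ (i, j) = (\<Sum>l<?\<rho>. B l i * C l j)"
    using vec_space.rank_factorization[OF assms(1)] by blast
  define F where "F l i = (if l < ?\<rho> then B l i else - G $$ (i, l - ?\<rho>))" for l i
  define E where "E l j = (if l < ?\<rho> then C l j else H $$ (j, l - ?\<rho>))" for l j
  show thesis
  proof
    show "?\<rho> + t \<le> s + t" using assms(2) by simp
    fix i j assume "i < n" "j < m"
    then have "(A - G * transpose_mat H) $$ (i, j)
        = (\<Sum>l<?\<rho>. B l i * C l j) - (\<Sum>u<t. G $$ (i, u) * H $$ (j, u))"
      using assms BC by (simp add: scalar_prod_def atLeast0LessThan)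
    also have "\<dots> = (\<Sum>l<?\<rho> + t. F l i * E l j)"
    proof -
      have "(\<Sum>l<?\<rho> + u. f l) = (\<Sum>l<?\<rho>. f l) + (\<Sum>l<u. f (?\<rho> + l))" for u and f :: "nat \<Rightarrow> 'a"
        by (induction u) (simp_all add: add.assoc)
      then show ?thesis by (simp add: F_def E_def sum_negf)
    qed
    finally show "(A - G * transpose_mat H) $$ (i, j) = (\<Sum>l<?\<rho> + t. F l i * E l j)" .
  qed
qed

lemma low_rank_update_dim_at_most:
  fixes A G H :: "'a::field mat"
  assumes "A \<in> carrier_mat n m" "vec_space.rank n A \<le> s" "G \<in> carrier_mat n t" "H \<in> carrier_mat m t"
  shows "dim_at_most m (s + t) (row_span (A - G * transpose_mat H))"
    and "dim_at_most n (s + t) (row_span (transpose_mat (A - G * transpose_mat H)))"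
proof -
  let ?M = "A - G * transpose_mat H"
  have M: "?M \<in> carrier_mat n m" using assms(1,3,4) by (intro minus_carrier_mat) auto
  obtain R F E where "R \<le> s + t" and fac: "\<And>i j. i < n \<Longrightarrow> j < m \<Longrightarrow> ?M $$ (i, j) = (\<Sum>l<R. F l i * E l j)"
    using low_rank_update_factorization[OF assms] by blast
  show "dim_at_most m (s + t) (row_span ?M)" by (rule dim_at_most_row_span[OF M \<open>R \<le> s + t\<close> fac])
  have "transpose_mat ?M $$ (i, j) = (\<Sum>l<R. E l i * F l j)" if "i < m" "j < n" for i j
  proof -
    have "transpose_mat ?M $$ (i, j) = ?M $$ (j, i)"
      using carrier_matD[OF M] that by (intro index_transpose_mat(1)) simp_all
    also have "\<dots> = (\<Sum>l<R. E l i * F l j)"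
      unfolding fac[OF that(2,1)] by (simp add: mult.commute)
    finally show ?thesis .
  qed
  then show "dim_at_most n (s + t) (row_span (transpose_mat ?M))"
    using M by (intro dim_at_most_row_span[OF _ \<open>R \<le> s + t\<close>]) auto
qed

lemma low_rank_update_mult:
  fixes A G H :: "'a::field mat"
  assumes "A \<in> carrier_mat n m" "G \<in> carrier_mat n t" "H \<in> carrier_mat m t"
  shows "T \<in> carrier_mat m k \<Longrightarrow> A * T - G * (transpose_mat H * T) = (A - G * transpose_mat H) * T"
    and "T \<in> carrier_mat k n \<Longrightarrow> T * A - (T * G) * transpose_mat H = T * (A - G * transpose_mat H)"
proof -
  have HT: "transpose_mat H \<in> carrier_mat t m" and GH: "G * transpose_mat H \<in> carrier_mat n m"
    using assms(2,3) by auto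
  show "A * T - G * (transpose_mat H * T) = (A - G * transpose_mat H) * T" if "T \<in> carrier_mat m k"
    unfolding assoc_mult_mat[symmetric, OF assms(2) HT that]
    by (rule minus_mult_distrib_mat[OF assms(1) GH that, symmetric])
  show "T * A - (T * G) * transpose_mat H = T * (A - G * transpose_mat H)" if "T \<in> carrier_mat k n"
    unfolding assoc_mult_mat[OF that assms(2) HT]
    by (rule mult_minus_distrib_mat[OF that assms(1) GH, symmetric])
qed

section \<open>Toeplitz matrices singular on a subspace\<close>

text \<open>Entry j of the row vector w^T * toeplitz_mat n r c.\<close>
definition toeplitz_row_mult :: "nat \<Rightarrow> nat \<Rightarrow> (nat \<Rightarrow> 'a::field) \<Rightarrow> (nat \<Rightarrow> 'a) \<Rightarrow> nat \<Rightarrow> 'a" where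
  "toeplitz_row_mult n r c w j = (\<Sum>i<n. w i * c (i + (r - 1) - j))"

definition toeplitz_singular_on :: "nat \<Rightarrow> nat \<Rightarrow> (nat \<Rightarrow> 'a::field) \<Rightarrow> (nat \<Rightarrow> 'a) set \<Rightarrow> bool" where
  "toeplitz_singular_on n r c V \<longleftrightarrow>
     (\<exists>w\<in>V. (\<exists>i<n. w i \<noteq> 0) \<and> (\<forall>j<r. toeplitz_row_mult n r c w j = 0))"

lemma toeplitz_row_mult_Suc:
  assumes "Suc j < r"
  shows "toeplitz_row_mult n r c w (Suc j) = toeplitz_row_mult n (r - 1) c w j"
proof -
  have "i + (r - 1) - Suc j = i + (r - 1 - 1) - j" for i using assms by arith
  then show ?thesis unfolding toeplitz_row_mult_def by simp
qed

lemma toeplitz_row_mult_diff: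
  "toeplitz_row_mult n r c (\<lambda>i. v i - a * w i) j
     = toeplitz_row_mult n r c v j - a * toeplitz_row_mult n r c w j"
  unfolding toeplitz_row_mult_def
  by (simp add: left_diff_distrib sum_subtractf sum_distrib_left mult.assoc)

lemma toeplitz_row_mult_cong:
  assumes "\<And>i. i < n \<Longrightarrow> q < i \<Longrightarrow> w i = 0" "\<And>i. i \<noteq> q + (r - 1) \<Longrightarrow> c i = d i"
    and "0 < j" "j < r"
  shows "toeplitz_row_mult n r c w j = toeplitz_row_mult n r d w j"
  unfolding toeplitz_row_mult_def
proof (rule sum.cong[OF refl])
  fix i assume "i \<in> {..<n}"
  then show "w i * c (i + (r - 1) - j) = w i * d (i + (r - 1) - j)"
    using assms by (cases "q < i") auto
qed

lemma toeplitz_row_mult_0_diff: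
  assumes "\<And>i. i < n \<Longrightarrow> q < i \<Longrightarrow> w i = 0" "\<And>i. i \<noteq> q + (r - 1) \<Longrightarrow> c i = d i" "q < n"
  shows "toeplitz_row_mult n r c w 0 - toeplitz_row_mult n r d w 0
           = w q * (c (q + (r - 1)) - d (q + (r - 1)))"
proof -
  let ?f = "\<lambda>i. w i * (c (i + (r - 1)) - d (i + (r - 1)))"
  have "toeplitz_row_mult n r c w 0 - toeplitz_row_mult n r d w 0 = (\<Sum>i<n. ?f i)"
    unfolding toeplitz_row_mult_def by (simp add: sum_subtractf right_diff_distrib)
  also have "\<dots> = ?f q + (\<Sum>i\<in>{..<n} - {q}. ?f i)"
    using \<open>q < n\<close> by (simp add: sum.remove)
  also have "(\<Sum>i\<in>{..<n} - {q}. ?f i) = 0"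
  proof (rule sum.neutral, intro ballI)
    fix i assume "i \<in> {..<n} - {q}"
    then show "?f i = 0" using assms(1)[of i] assms(2)[of "i + (r - 1)"] by (cases "q < i") auto
  qed
  finally show ?thesis by simp
qed

lemma toeplitz_singular_witness_coord:
  assumes "\<not> toeplitz_singular_on n (r - 1) c {w \<in> V. w q = 0}"
    and "w \<in> V" "\<exists>i<n. w i \<noteq> 0" "\<forall>j<r. toeplitz_row_mult n r c w j = 0"
  shows "w q \<noteq> 0"
proof
  assume "w q = 0"
  moreover have "toeplitz_row_mult n (r - 1) c w j = 0" if "j < r - 1" for j
  proof -
    have "Suc j < r" using that by simp
    then show ?thesis using assms(4) toeplitz_row_mult_Suc[of j r n c w] by simp
  qed
  ultimately show False using assms(1,2,3) unfolding toeplitz_singular_on_def by blast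
qed

definition vanishes_above :: "nat \<Rightarrow> nat \<Rightarrow> (nat \<Rightarrow> 'a::zero) set \<Rightarrow> bool" where
  "vanishes_above n q V \<longleftrightarrow> (\<forall>w\<in>V. \<forall>i<n. q < i \<longrightarrow> w i = 0)"

lemma obtain_leading_coord:
  fixes V :: "(nat \<Rightarrow> 'a::zero) set"
  assumes "\<exists>w\<in>V. \<exists>i<n. w i \<noteq> 0"
  obtains q g where "q < n" "g \<in> V" "g q \<noteq> 0" "vanishes_above n q V"
proof -
  define supp where "supp = {i. i < n \<and> (\<exists>w\<in>V. w i \<noteq> 0)}"
  have "finite supp" "supp \<noteq> {}" using assms unfolding supp_def by auto
  then have "Max supp \<in> supp" by (rule Max_in)
  moreover have "w i = 0" if "w \<in> V" "i < n" "Max supp < i" for w i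
  proof (rule ccontr)
    assume "w i \<noteq> 0"
    with that have "i \<in> supp" unfolding supp_def by blast
    with \<open>finite supp\<close> \<open>Max supp < i\<close> show False by (simp add: leD)
  qed
  ultimately show thesis using that unfolding supp_def vanishes_above_def by blast
qed

text \<open>Since the columns 1, ..., r - 1 are injective on the hyperplane w q = 0, their common
  kernel vectors are unique up to scaling; column 0 then fixes c (q + r - 1) linearly in the
  other entries.\<close>
lemma toeplitz_singular_determines_coord:
  assumes V: "lin_closed V" and lead: "vanishes_above n q V"
    and "q < n" "0 < r"
    and c: "toeplitz_singular_on n r c V" "\<not> toeplitz_singular_on n (r - 1) c {w \<in> V. w q = 0}"
    and d: "toeplitz_singular_on n r d V" "\<not> toeplitz_singular_on n (r - 1) d {w \<in> V. w q = 0}"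
    and agree: "\<And>i. i \<noteq> q + (r - 1) \<Longrightarrow> c i = d i"
  shows "c (q + (r - 1)) = d (q + (r - 1))"
proof -
  obtain u where u: "u \<in> V" "\<exists>i<n. u i \<noteq> 0" "\<forall>j<r. toeplitz_row_mult n r c u j = 0"
    using c(1) unfolding toeplitz_singular_on_def by blast
  obtain v where v: "v \<in> V" "\<exists>i<n. v i \<noteq> 0" "\<forall>j<r. toeplitz_row_mult n r d v j = 0"
    using d(1) unfolding toeplitz_singular_on_def by blast
  have uq: "u q \<noteq> 0" by (rule toeplitz_singular_witness_coord[OF c(2) u])
  have vq: "v q \<noteq> 0" by (rule toeplitz_singular_witness_coord[OF d(2) v])
  define a where "a = u q / v q"
  define w where "w = (\<lambda>i. u i - a * v i)"
  have "w \<in> V" using V u(1) v(1) unfolding lin_closed_def w_def by blast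
  moreover have "w q = 0" using vq unfolding w_def a_def by simp
  moreover have "\<forall>j<r - 1. toeplitz_row_mult n (r - 1) c w j = 0"
  proof (intro allI impI)
    fix j assume "j < r - 1"
    then have "Suc j < r" by simp
    have "toeplitz_row_mult n (r - 1) c w j = toeplitz_row_mult n r c w (Suc j)"
      by (rule toeplitz_row_mult_Suc[OF \<open>Suc j < r\<close>, symmetric])
    also have "\<dots> = toeplitz_row_mult n r c u (Suc j) - a * toeplitz_row_mult n r c v (Suc j)"
      unfolding w_def by (rule toeplitz_row_mult_diff)
    also have "toeplitz_row_mult n r c v (Suc j) = toeplitz_row_mult n r d v (Suc j)"
      using lead v(1) agree \<open>Suc j < r\<close>
      by (intro toeplitz_row_mult_cong) (auto simp: vanishes_above_def)
    finally show "toeplitz_row_mult n (r - 1) c w j = 0" using u(3) v(3) \<open>Suc j < r\<close> by simp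
  qed
  ultimately have "\<forall>i<n. w i = 0" using c(2) unfolding toeplitz_singular_on_def by blast
  then have "toeplitz_row_mult n r d w 0 = 0" by (simp add: toeplitz_row_mult_def)
  then have "toeplitz_row_mult n r d u 0 = 0"
    using v(3) \<open>0 < r\<close> by (simp add: w_def toeplitz_row_mult_diff)
  moreover have "toeplitz_row_mult n r c u 0 = 0" using u(3) \<open>0 < r\<close> by simp
  ultimately have "u q * (c (q + (r - 1)) - d (q + (r - 1))) = 0"
    using toeplitz_row_mult_0_diff[of n q u r c d] lead u(1) agree \<open>q < n\<close>
    by (simp add: vanishes_above_def)
  then show ?thesis using uq by simp
qed

lemma card_PiE_coord_determined:
  assumes "finite S" "finite I" "x \<in> I" "E \<subseteq> PiE I (\<lambda>_. S)"
    and determined: "\<And>c d. c \<in> E \<Longrightarrow> d \<in> E \<Longrightarrow> (\<And>i. i \<noteq> x \<Longrightarrow> c i = d i) \<Longrightarrow> c x = d x"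
  shows "card E * card S \<le> card S ^ card I"
proof -
  let ?forget = "\<lambda>c. c(x := undefined)"
  have "inj_on ?forget E"
  proof
    fix c d assume "c \<in> E" "d \<in> E" "?forget c = ?forget d"
    then have "\<And>i. i \<noteq> x \<Longrightarrow> c i = d i" by (metis fun_upd_other)
    with determined[OF \<open>c \<in> E\<close> \<open>d \<in> E\<close>] show "c = d" by (metis ext)
  qed
  moreover have "?forget ` E \<subseteq> PiE (I - {x}) (\<lambda>_. S)"
    using assms(4) by (auto simp: PiE_def extensional_def Pi_def)
  ultimately have "card E \<le> card (PiE (I - {x}) (\<lambda>_. S))"
    by (metis card_image card_mono assms(1,2) finite_Diff finite_PiE)
  also have "\<dots> = card S ^ (card I - 1)"
    using assms(2,3) by (simp add: card_PiE)
  finally have "card E * card S \<le> card S ^ (card I - 1) * card S" by simp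
  also have "\<dots> = card S ^ card I"
    using assms(2,3) by (metis card_gt_0_iff empty_iff power_minus_mult)
  finally show ?thesis .
qed

lemma card_toeplitz_singular_lead_le:
  fixes V :: "(nat \<Rightarrow> 'a::field) set"
  assumes "finite S" "lin_closed V" "q < n" "0 < r" "n + r \<le> N + 1" "vanishes_above n q V"
  shows "card {c \<in> PiE {..<N} (\<lambda>_. S). toeplitz_singular_on n r c V
           \<and> \<not> toeplitz_singular_on n (r - 1) c {w \<in> V. w q = 0}} * card S \<le> card S ^ N"
proof -
  have "card {c \<in> PiE {..<N} (\<lambda>_. S). toeplitz_singular_on n r c V
           \<and> \<not> toeplitz_singular_on n (r - 1) c {w \<in> V. w q = 0}} * card S \<le> card S ^ card {..<N}"
  proof (rule card_PiE_coord_determined[OF \<open>finite S\<close> finite_lessThan])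
    show "q + (r - 1) \<in> {..<N}" using assms(3-5) by auto
  next
    fix c d assume c: "c \<in> {c \<in> PiE {..<N} (\<lambda>_. S). toeplitz_singular_on n r c V
           \<and> \<not> toeplitz_singular_on n (r - 1) c {w \<in> V. w q = 0}}"
      and d: "d \<in> {c \<in> PiE {..<N} (\<lambda>_. S). toeplitz_singular_on n r c V
           \<and> \<not> toeplitz_singular_on n (r - 1) c {w \<in> V. w q = 0}}"
      and agree: "\<And>i. i \<noteq> q + (r - 1) \<Longrightarrow> c i = d i"
    show "c (q + (r - 1)) = d (q + (r - 1))"
      using c d by (intro toeplitz_singular_determines_coord[OF assms(2,6,3,4) _ _ _ _ agree]) simp_all
  qed blast
  then show ?thesis by simp
qed

lemma card_toeplitz_singular_le:
  fixes V :: "(nat \<Rightarrow> 'a::field) set"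
  assumes "finite S" "lin_closed V" "dim_at_most n p V" "p \<le> r" "n + r \<le> N + 1"
  shows "card {c \<in> PiE {..<N} (\<lambda>_. S). toeplitz_singular_on n r c V} * card S \<le> p * card S ^ N"
  using assms(2-5)
proof (induction p arbitrary: V r)
  case 0
  then have "\<not> toeplitz_singular_on n r c V" for c
    using dim_at_most_0_imp_zero unfolding toeplitz_singular_on_def by blast
  then show ?case by simp
next
  case (Suc p V r)
  let ?\<Omega> = "PiE {..<N} (\<lambda>_. S)"
  let ?Bad = "\<lambda>V r. {c \<in> ?\<Omega>. toeplitz_singular_on n r c V}"
  show ?case
  proof (cases "\<exists>w\<in>V. \<exists>i<n. w i \<noteq> 0")
    case False
    then have "\<not> toeplitz_singular_on n r c V" for c unfolding toeplitz_singular_on_def by blast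
    then show ?thesis by simp
  next
    case True
    obtain q g where "q < n" "g \<in> V" "g q \<noteq> 0" and lead: "vanishes_above n q V"
      using obtain_leading_coord[OF True] by blast
    define V' where "V' = {w \<in> V. w q = 0}"
    define E where "E = {c \<in> ?\<Omega>. toeplitz_singular_on n r c V \<and> \<not> toeplitz_singular_on n (r - 1) c V'}"
    have "0 < r" using Suc.prems by simp
    have "lin_closed V'" using Suc.prems(1) unfolding lin_closed_def V'_def by simp
    moreover have "dim_at_most n p V'" unfolding V'_def
      by (rule dim_at_most_vanishing_coord[OF Suc.prems(2) \<open>g \<in> V\<close> \<open>g q \<noteq> 0\<close> \<open>q < n\<close>])
    ultimately have IH: "card (?Bad V' (r - 1)) * card S \<le> p * card S ^ N"
      using Suc.prems(3,4) by (intro Suc.IH) auto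
    have E: "card E * card S \<le> card S ^ N" unfolding E_def V'_def
      using card_toeplitz_singular_lead_le[OF \<open>finite S\<close> Suc.prems(1) \<open>q < n\<close> \<open>0 < r\<close> _ lead]
        Suc.prems(4) by simp
    have "finite ?\<Omega>" using \<open>finite S\<close> by (simp add: finite_PiE)
    then have "card (?Bad V r) \<le> card (?Bad V' (r - 1) \<union> E)"
      by (intro card_mono) (auto simp: E_def)
    also have "\<dots> \<le> card (?Bad V' (r - 1)) + card E"
      by (rule card_Un_le)
    finally have "card (?Bad V r) * card S \<le> (card (?Bad V' (r - 1)) + card E) * card S"
      by (rule mult_le_mono1)
    then show ?thesis using IH E by (simp add: add_mult_distrib)
  qed
qed

section \<open>Rank profiles\<close>

lemma sum_rows_mult_mat:
  assumes "M \<in> carrier_mat m n" "T \<in> carrier_mat n k" "j < k" "\<forall>l\<in>L. l < m"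
  shows "(\<Sum>t<n. (\<Sum>l\<in>L. y l * M $$ (l, t)) * T $$ (t, j)) = (\<Sum>l\<in>L. y l * (M * T) $$ (l, j))"
proof -
  have "(\<Sum>t<n. (\<Sum>l\<in>L. y l * M $$ (l, t)) * T $$ (t, j))
      = (\<Sum>l\<in>L. y l * (\<Sum>t<n. M $$ (l, t) * T $$ (t, j)))"
    by (simp add: sum_distrib_left sum_distrib_right mult.assoc sum.swap[of _ "{..<n}"])
  also have "\<dots> = (\<Sum>l\<in>L. y l * (M * T) $$ (l, j))"
    using assms by (intro sum.cong) (auto simp: scalar_prod_def atLeast0LessThan)
  finally show ?thesis .
qed

lemma sum_unit_minus_prefix:
  fixes f :: "nat \<Rightarrow> 'a::ring_1"
  assumes "i < m"
  shows "(\<Sum>l<m. (if l = i then 1 else if l < i then - c l else 0) * f l) = f i - (\<Sum>l<i. c l * f l)"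
proof -
  have "(\<Sum>l<m. (if l = i then 1 else if l < i then - c l else 0) * f l)
      = (\<Sum>l<m. if l = i then f l else 0) - (\<Sum>l<m. if l < i then c l * f l else 0)"
    unfolding sum_subtractf[symmetric] by (intro sum.cong) auto
  also have "{l \<in> {..<m}. l < i} = {..<i}" using assms by auto
  then have "(\<Sum>l<m. if l < i then c l * f l else 0) = (\<Sum>l<i. c l * f l)"
    by (simp add: sum.inter_filter[symmetric])
  finally show ?thesis using assms by simp
qed

text \<open>A vector y with y i = 1 and y l = - c l for l < i turns a relation between row i and
  the earlier rows into a row-space vector killed by T.\<close>
lemma row_rank_profile_mult:
  assumes M: "M \<in> carrier_mat m n" and T: "T \<in> carrier_mat n k"
    and inj: "\<And>w. w \<in> row_span M \<Longrightarrow> \<forall>j<k. (\<Sum>t<n. w t * T $$ (t, j)) = 0 \<Longrightarrow> \<forall>t<n. w t = 0"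
  shows "row_rank_profile (M * T) = row_rank_profile M"
proof -
  have "row_in_prev_span (M * T) i \<longleftrightarrow> row_in_prev_span M i" if "i < m" for i
  proof
    assume "row_in_prev_span M i"
    then obtain c where c: "\<And>t. t < n \<Longrightarrow> M $$ (i, t) = (\<Sum>l<i. c l * M $$ (l, t))"
      unfolding row_in_prev_span_def using M by auto
    have "(M * T) $$ (i, j) = (\<Sum>l<i. c l * (M * T) $$ (l, j))" if "j < k" for j
    proof -
      have "(M * T) $$ (i, j) = (\<Sum>t<n. (\<Sum>l<i. c l * M $$ (l, t)) * T $$ (t, j))"
        using M T \<open>i < m\<close> \<open>j < k\<close> c by (auto simp: scalar_prod_def atLeast0LessThan intro: sum.cong)
      also have "\<dots> = (\<Sum>l<i. c l * (M * T) $$ (l, j))"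
        using M T \<open>i < m\<close> \<open>j < k\<close> by (intro sum_rows_mult_mat) auto
      finally show ?thesis .
    qed
    then show "row_in_prev_span (M * T) i" unfolding row_in_prev_span_def using T by auto
  next
    assume "row_in_prev_span (M * T) i"
    then obtain c where c: "\<And>j. j < k \<Longrightarrow> (M * T) $$ (i, j) = (\<Sum>l<i. c l * (M * T) $$ (l, j))"
      unfolding row_in_prev_span_def using T by auto
    define y where "y l = (if l = i then 1 else if l < i then - c l else 0)" for l
    have y: "(\<Sum>l<m. y l * f l) = f i - (\<Sum>l<i. c l * f l)" for f :: "nat \<Rightarrow> 'a"
      unfolding y_def using \<open>i < m\<close> by (rule sum_unit_minus_prefix)
    define w where "w t = (\<Sum>l<m. y l * M $$ (l, t))" for t
    have "w \<in> row_span M" using M unfolding row_span_def w_def by auto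
    moreover have "\<forall>j<k. (\<Sum>t<n. w t * T $$ (t, j)) = 0"
      using sum_rows_mult_mat[OF M T, of _ "{..<m}" y] y c by (simp add: w_def)
    ultimately have "\<forall>t<n. w t = 0" by (rule inj)
    then show "row_in_prev_span M i" unfolding row_in_prev_span_def w_def y using M by auto
  qed
  then show ?thesis unfolding row_rank_profile_def using M T by (auto intro!: filter_cong)
qed

lemma toeplitz_mat_carrier [simp]: "toeplitz_mat m k c \<in> carrier_mat m k"
  by (simp add: toeplitz_mat_def)

lemma row_rank_profile_mult_toeplitz:
  assumes "M \<in> carrier_mat m n" "\<not> toeplitz_singular_on n k c (row_span M)"
  shows "row_rank_profile (M * toeplitz_mat n k c) = row_rank_profile M"
proof (rule row_rank_profile_mult[OF assms(1)])
  show "toeplitz_mat n k c \<in> carrier_mat n k" by simp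
  fix w assume "w \<in> row_span M" "\<forall>j<k. (\<Sum>t<n. w t * toeplitz_mat n k c $$ (t, j)) = 0"
  moreover have "(\<Sum>t<n. w t * toeplitz_mat n k c $$ (t, j)) = toeplitz_row_mult n k c w j"
    if "j < k" for j
    using that unfolding toeplitz_row_mult_def toeplitz_mat_def by (intro sum.cong) auto
  ultimately show "\<forall>t<n. w t = 0" using assms(2) unfolding toeplitz_singular_on_def by auto
qed

text \<open>Outside the index range the value undefined keeps reverse_seq N inside
  PiE {..<N} (\<lambda>_. S).\<close>
definition reverse_seq :: "nat \<Rightarrow> (nat \<Rightarrow> 'a) \<Rightarrow> nat \<Rightarrow> 'a" where
  "reverse_seq N c k = (if k < N then c (N - 1 - k) else undefined)"

lemma card_reverse_seq:
  "card {c \<in> PiE {..<N} (\<lambda>_. S). P (reverse_seq N c)} = card {c \<in> PiE {..<N} (\<lambda>_. S). P c}"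
proof (rule bij_betw_same_card[of "reverse_seq N"], rule bij_betw_byWitness[of _ "reverse_seq N"])
  have involution: "reverse_seq N (reverse_seq N c) = c" if "c \<in> PiE {..<N} (\<lambda>_. S)" for c
    using that by (auto simp: reverse_seq_def PiE_def extensional_def)
  have closed: "reverse_seq N c \<in> PiE {..<N} (\<lambda>_. S)" if "c \<in> PiE {..<N} (\<lambda>_. S)" for c
    using that by (auto simp: reverse_seq_def PiE_def extensional_def Pi_def)
  show "\<forall>c\<in>{c \<in> PiE {..<N} (\<lambda>_. S). P (reverse_seq N c)}. reverse_seq N (reverse_seq N c) = c"
    "\<forall>c\<in>{c \<in> PiE {..<N} (\<lambda>_. S). P c}. reverse_seq N (reverse_seq N c) = c"
    using involution by auto
  show "reverse_seq N ` {c \<in> PiE {..<N} (\<lambda>_. S). P (reverse_seq N c)} \<subseteq> {c \<in> PiE {..<N} (\<lambda>_. S). P c}"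
    "reverse_seq N ` {c \<in> PiE {..<N} (\<lambda>_. S). P c} \<subseteq> {c \<in> PiE {..<N} (\<lambda>_. S). P (reverse_seq N c)}"
    using closed involution by auto
qed

lemma transpose_toeplitz_mat:
  "transpose_mat (toeplitz_mat k n c) = toeplitz_mat n k (reverse_seq (n + k - 1) c)"
proof (rule eq_matI)
  fix i j assume "i < dim_row (toeplitz_mat n k (reverse_seq (n + k - 1) c))"
    "j < dim_col (toeplitz_mat n k (reverse_seq (n + k - 1) c))"
  then have "i < n" "j < k" by (simp_all add: toeplitz_mat_def)
  moreover have "i + (k - 1) - j < n + k - 1" "n + k - 1 - 1 - (i + (k - 1) - j) = j + (n - 1) - i"
    using \<open>i < n\<close> \<open>j < k\<close> by arith+
  ultimately show "transpose_mat (toeplitz_mat k n c) $$ (i, j)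
      = toeplitz_mat n k (reverse_seq (n + k - 1) c) $$ (i, j)"
    by (simp add: toeplitz_mat_def reverse_seq_def)
qed (simp_all add: toeplitz_mat_def)

lemma col_rank_profile_toeplitz_mult:
  assumes "M \<in> carrier_mat n m"
    and "\<not> toeplitz_singular_on n k (reverse_seq (n + k - 1) c) (row_span (transpose_mat M))"
  shows "col_rank_profile (toeplitz_mat k n c * M) = col_rank_profile M"
proof -
  have "transpose_mat (toeplitz_mat k n c * M) = transpose_mat M * transpose_mat (toeplitz_mat k n c)"
    using assms(1) by (intro transpose_mult[of _ k n]) auto
  then show ?thesis
    unfolding col_rank_profile_def transpose_toeplitz_mat
    using row_rank_profile_mult_toeplitz[of "transpose_mat M" m n] assms by simp
qed

section \<open>The probability bound\<close>

lemma prob_pmf_of_set_square_ge: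
  assumes "finite \<Omega>" "\<Omega> \<noteq> {}" "B1 \<subseteq> \<Omega>" "B2 \<subseteq> \<Omega>" "\<Omega> \<times> \<Omega> - (B1 \<times> \<Omega> \<union> \<Omega> \<times> B2) \<subseteq> Good"
    and "card B1 * k \<le> r * card \<Omega>" "card B2 * k \<le> r * card \<Omega>" "0 < k"
  shows "measure_pmf.prob (pmf_of_set (\<Omega> \<times> \<Omega>)) Good \<ge> 1 - 2 * real r / real k"
proof -
  let ?P = "measure_pmf.prob (pmf_of_set (\<Omega> \<times> \<Omega>))"
  have nonempty: "\<Omega> \<times> \<Omega> \<noteq> {}" and fin: "finite (\<Omega> \<times> \<Omega>)" using assms(1,2) by auto
  have small: "real (card B) / card \<Omega> \<le> r / k" if "card B * k \<le> r * card \<Omega>" for B :: "'a set"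
  proof -
    have "real (card B) * k \<le> real r * card \<Omega>" using that by (metis of_nat_le_iff of_nat_mult)
    then show ?thesis using assms(1,2,8) by (simp add: divide_simps card_gt_0_iff)
  qed
  have "1 = ?P (\<Omega> \<times> \<Omega>)" using measure_pmf_of_set[OF nonempty fin] fin nonempty by simp
  also have "\<dots> \<le> ?P (B1 \<times> \<Omega> \<union> \<Omega> \<times> B2 \<union> Good)"
    using assms(5) by (intro measure_pmf.finite_measure_mono) auto
  also have "\<dots> \<le> ?P (B1 \<times> \<Omega>) + ?P (\<Omega> \<times> B2) + ?P Good"
    using measure_Un_le[of _ "measure_pmf _"] by (smt (verit) UNIV_I sets_measure_pmf)
  finally have "1 \<le> ?P (B1 \<times> \<Omega>) + ?P (\<Omega> \<times> B2) + ?P Good" .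
  moreover have "?P (B1 \<times> \<Omega>) = card B1 / card \<Omega>" "?P (\<Omega> \<times> B2) = card B2 / card \<Omega>"
    using assms(1-4) measure_pmf_of_set[OF nonempty fin]
    by (simp_all add: Int_absorb1 Sigma_mono card_cartesian_product)
  ultimately show ?thesis using small[OF assms(6)] small[OF assms(7)] by simp
qed

theorem mainTheorem4:
  fixes A G H :: "'a::field mat" and n s t r :: nat and S :: "'a set"
  assumes "A \<in> carrier_mat n n"
    and "vec_space.rank n A \<le> s"
    and "G \<in> carrier_mat n t" and "H \<in> carrier_mat n t"
    and "r = s + t"
    and "finite S" and "S \<noteq> {}"
  shows "measure_pmf.prob
           (pmf_of_set ((PiE {..<n + r - 1} (\<lambda>_. S)) \<times> (PiE {..<n + r - 1} (\<lambda>_. S))))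
           {(c1, c2). let T1 = toeplitz_mat n r c1; T2 = toeplitz_mat r n c2;
                          M = A - G * transpose_mat H;
                          P = A * T1 - G * (transpose_mat H * T1);
                          Q = T2 * A - (T2 * G) * transpose_mat H
                      in row_rank_profile P = row_rank_profile M
                         \<and> col_rank_profile Q = col_rank_profile M}
         \<ge> 1 - 2 * real r / real (card S)"
proof -
  let ?\<Omega> = "PiE {..<n + r - 1} (\<lambda>_. S)"
  let ?M = "A - G * transpose_mat H"
  have M: "?M \<in> carrier_mat n n" using assms(1,3,4) by (intro minus_carrier_mat) auto
  note dim = low_rank_update_dim_at_most[OF assms(1-4), folded assms(5)]
  define B1 where "B1 = {c \<in> ?\<Omega>. toeplitz_singular_on n r c (row_span ?M)}"
  define B2 where "B2 = {c \<in> ?\<Omega>. toeplitz_singular_on n r (reverse_seq (n + r - 1) c) (row_span (transpose_mat ?M))}"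
  have card_\<Omega>: "card ?\<Omega> = card S ^ (n + r - 1)" using assms(6) by (simp add: card_PiE)
  have "card B1 * card S \<le> r * card ?\<Omega>" unfolding B1_def card_\<Omega>
    by (rule card_toeplitz_singular_le[OF assms(6) lin_closed_row_span dim(1)]) auto
  moreover have "card B2 * card S \<le> r * card ?\<Omega>" unfolding B2_def card_\<Omega>
      card_reverse_seq[where P = "\<lambda>c. toeplitz_singular_on n r c (row_span (transpose_mat ?M))"]
    by (rule card_toeplitz_singular_le[OF assms(6) lin_closed_row_span dim(2)]) auto
  ultimately show ?thesis
    using assms(6,7) low_rank_update_mult(1)[OF assms(1,3,4) toeplitz_mat_carrier[of n r]]
      low_rank_update_mult(2)[OF assms(1,3,4) toeplitz_mat_carrier[of r n]]
      row_rank_profile_mult_toeplitz[OF M] col_rank_profile_toeplitz_mult[OF M]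
    by (intro prob_pmf_of_set_square_ge[of ?\<Omega> B1 B2])
       (auto simp: B1_def B2_def Let_def finite_PiE card_gt_0_iff PiE_eq_empty_iff)
qed

end
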